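(* Let $X$, $Y$ be disjoint sets of cardinality at least two, $M\le\mathrm{Sym}(X)$ and $N\le\mathrm{Sym}(Y)$ nontrivial permutation groups, $T$ the $(|X|,|Y|)$-biregular tree and $c$ a legal colouring. Let $a$ be any arc of $T$ and $G:=U_c(M,N)$. Then for every $h\in G_a$ (the subgroup fixing both $o(a)$ and $t(a)$) there exists $g\in G$ such that $g$ fixes $T_{\overline{a}}$ pointwise and $g|_{T_a} = h|_{T_a}$.
   Context: $T$ has natural bipartition $VT=V_X\sqcup V_Y$ (vertices in $V_X$ have valency $|X|$, in $V_Y$ valency $|Y|$). An arc is an ordered pair $a=(o(a),t(a))$ of adjacent vertices, and $\overline{a}=(t(a),o(a))$. $T_a$ denotes the connected component of $T$ with the edge $\{o(a),t(a)\}$ removed that contains $o(a)$, and $T_{\overline a}$ the component containing $t(a)$. $A(v)$, $\overline{A}(v)$ are the sets of arcs with origin, resp. terminus, $v$. A legal colouring is a map $c:AT\to X\cup Y$ restricting to a bijection $A(v)\to X$ for $v\in V_X$, to a bijection $A(v)\to Y$ for $v\in V_Y$, and constant on each $\overline{A}(v)$. $U_c(M,N)$ is the group of $g\in\mathrm{Aut}(T)$ with $gV_X=V_X$ and $c|_{A(gv)}\circ g|_{A(v)}\circ(c|_{A(v)})^{-1}$ in $M$ for $v\in V_X$ and in $N$ for $v\in V_Y$. *)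

theory Defs
  imports "HOL-Algebra.Bij" "HOL-Library.Equipollence"
begin

text \<open>A graph on the vertex type 'v is given by an adjacency relation E.
  Arcs are ordered pairs (u, w) with E u w.\<close>

definition graph_cycle :: "('v \<Rightarrow> 'v \<Rightarrow> bool) \<Rightarrow> 'v list \<Rightarrow> bool" where
  "graph_cycle E vs \<longleftrightarrow> length vs \<ge> 3 \<and> distinct vs
     \<and> (\<forall>i. Suc i < length vs \<longrightarrow> E (vs ! i) (vs ! Suc i))
     \<and> E (last vs) (hd vs)"

definition is_tree :: "('v \<Rightarrow> 'v \<Rightarrow> bool) \<Rightarrow> bool" where
  "is_tree E \<longleftrightarrow> (\<forall>u w. E u w \<longrightarrow> E w u) \<and> (\<forall>u. \<not> E u u)
     \<and> (\<forall>u w. (u, w) \<in> {(p, q). E p q}\<^sup>*)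
     \<and> (\<nexists>vs. graph_cycle E vs)"

text \<open>T is the (|X|,|Y|)-biregular tree with bipartition VX (the complement being VY).\<close>
definition biregular_tree ::
  "('v \<Rightarrow> 'v \<Rightarrow> bool) \<Rightarrow> 'v set \<Rightarrow> 'c set \<Rightarrow> 'c set \<Rightarrow> bool" where
  "biregular_tree E VX X Y \<longleftrightarrow> is_tree E
     \<and> (\<forall>u w. E u w \<longrightarrow> (u \<in> VX \<longleftrightarrow> w \<notin> VX))
     \<and> (\<forall>v \<in> VX. {w. E v w} \<approx> X)
     \<and> (\<forall>v. v \<notin> VX \<longrightarrow> {w. E v w} \<approx> Y)"

definition legal_colouring ::
  "('v \<Rightarrow> 'v \<Rightarrow> bool) \<Rightarrow> 'v set \<Rightarrow> 'c set \<Rightarrow> 'c set \<Rightarrow> ('v \<times> 'v \<Rightarrow> 'c) \<Rightarrow> bool" where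
  "legal_colouring E VX X Y c \<longleftrightarrow>
     (\<forall>v \<in> VX. bij_betw (\<lambda>w. c (v, w)) {w. E v w} X)
     \<and> (\<forall>v. v \<notin> VX \<longrightarrow> bij_betw (\<lambda>w. c (v, w)) {w. E v w} Y)
     \<and> (\<forall>v u u'. E u v \<and> E u' v \<longrightarrow> c (u, v) = c (u', v))"

definition tree_aut :: "('v \<Rightarrow> 'v \<Rightarrow> bool) \<Rightarrow> ('v \<Rightarrow> 'v) \<Rightarrow> bool" where
  "tree_aut E g \<longleftrightarrow> bij g \<and> (\<forall>u w. E u w \<longleftrightarrow> E (g u) (g w))"

text \<open>The local action c|A(gv) o g|A(v) o (c|A(v))^-1, as an (extensional) map on D
  (D = X for v in VX, D = Y for v in VY).\<close>
definition local_action ::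
  "('v \<Rightarrow> 'v \<Rightarrow> bool) \<Rightarrow> ('v \<times> 'v \<Rightarrow> 'c) \<Rightarrow> ('v \<Rightarrow> 'v) \<Rightarrow> 'v \<Rightarrow> 'c set \<Rightarrow> 'c \<Rightarrow> 'c" where
  "local_action E c g v D = (\<lambda>x \<in> D. c (g v, g (THE w. E v w \<and> c (v, w) = x)))"

definition U_c ::
  "('v \<Rightarrow> 'v \<Rightarrow> bool) \<Rightarrow> 'v set \<Rightarrow> 'c set \<Rightarrow> 'c set \<Rightarrow> ('v \<times> 'v \<Rightarrow> 'c)
     \<Rightarrow> ('c \<Rightarrow> 'c) set \<Rightarrow> ('c \<Rightarrow> 'c) set \<Rightarrow> ('v \<Rightarrow> 'v) set" where
  "U_c E VX X Y c M N = {g. tree_aut E g \<and> g ` VX = VX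
     \<and> (\<forall>v \<in> VX. local_action E c g v X \<in> M)
     \<and> (\<forall>v. v \<notin> VX \<longrightarrow> local_action E c g v Y \<in> N)}"

text \<open>half_tree E u w = vertex set of T_a for the arc a = (u, w): the component of
  T minus the edge {u, w} containing u.\<close>
definition half_tree :: "('v \<Rightarrow> 'v \<Rightarrow> bool) \<Rightarrow> 'v \<Rightarrow> 'v \<Rightarrow> 'v set" where
  "half_tree E u w = {x. (u, x) \<in> {(p, q). E p q \<and> {p, q} \<noteq> {u, w}}\<^sup>*}"

end

theory Submission
  imports Defs "HOL-Library.Transitive_Closure_Table"
begin

text \<open>Take g to be h on the half-tree T_a and the identity on its complement T_(a-bar).
  Since h fixes the edge a, it maps T_a onto itself, and the only edge of T between T_a
  and its complement is a itself; so g is again a tree automorphism. At every vertex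
  the local action of g is either that of h or trivial, hence lies in M resp. N.\<close>

lemma coloured_neighbour:
  assumes "bij_betw (\<lambda>w. c (v, w)) {w. E v w} D" "x \<in> D"
  shows "E v (THE w. E v w \<and> c (v, w) = x) \<and> c (v, THE w. E v w \<and> c (v, w) = x) = x"
proof -
  have "x \<in> (\<lambda>w. c (v, w)) ` {w. E v w}" using assms by (simp add: bij_betw_def)
  then obtain w0 where w0: "E v w0" "c (v, w0) = x" by auto
  have "inj_on (\<lambda>w. c (v, w)) {w. E v w}" using assms(1) bij_betw_imp_inj_on by metis
  then have "(THE w. E v w \<and> c (v, w) = x) = w0"
    using w0 by (intro the_equality) (auto dest: inj_onD)
  then show ?thesis using w0 by simp
qed

lemma local_action_cong:
  assumes "bij_betw (\<lambda>w. c (v, w)) {w. E v w} D" "g v = h v" "\<And>y. E v y \<Longrightarrow> g y = h y"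
  shows "local_action E c g v D = local_action E c h v D"
  unfolding local_action_def
  using coloured_neighbour[where c=c and v=v and E=E, OF assms(1)] assms(2,3)
  by (intro restrict_ext) metis

lemma local_action_id:
  assumes "bij_betw (\<lambda>w. c (v, w)) {w. E v w} D" "g v = v" "\<And>y. E v y \<Longrightarrow> g y = y"
  shows "local_action E c g v D = (\<lambda>x\<in>D. x)"
  unfolding local_action_def
  using coloured_neighbour[where c=c and v=v and E=E, OF assms(1)] assms(2,3)
  by (intro restrict_ext) metis

lemma tree_aut_inv:
  assumes "tree_aut E f"
  shows "tree_aut E (inv_into UNIV f)"
  using assms unfolding tree_aut_def by (metis bij_imp_bij_inv bij_inv_eq_iff)

lemma half_tree_closed_under_tree_aut:
  assumes "tree_aut E f" "f u = u" "f w = w" "x \<in> half_tree E u w"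
  shows "f x \<in> half_tree E u w"
proof -
  have "(u, x) \<in> {(p, q). E p q \<and> {p, q} \<noteq> {u, w}}\<^sup>*"
    using assms(4) unfolding half_tree_def by simp
  then have "(u, f x) \<in> {(p, q). E p q \<and> {p, q} \<noteq> {u, w}}\<^sup>*"
  proof (induction rule: rtrancl_induct)
    case base
    then show ?case using assms(2) by simp
  next
    case (step y z)
    have "{f y, f z} \<noteq> {u, w}"
    proof
      assume "{f y, f z} = {u, w}"
      then have "f ` {y, z} = f ` {u, w}" using assms(2,3) by simp
      moreover have "inj f" using assms(1) unfolding tree_aut_def by (simp add: bij_is_inj)
      ultimately have "{y, z} = {u, w}" by (simp only: inj_image_eq_iff)
      then show False using step(2) by simp
    qed
    moreover have "E (f y) (f z)" using step(2) assms(1) unfolding tree_aut_def by simp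
    ultimately show ?case using step(3) by (simp add: rtrancl_into_rtrancl)
  qed
  then show ?thesis unfolding half_tree_def by simp
qed

lemma tree_aut_image_half_tree:
  assumes "tree_aut E f" "f u = u" "f w = w"
  shows "f ` half_tree E u w = half_tree E u w"
proof
  show "f ` half_tree E u w \<subseteq> half_tree E u w"
    using half_tree_closed_under_tree_aut[OF assms] by blast
  show "half_tree E u w \<subseteq> f ` half_tree E u w"
  proof
    fix x assume x: "x \<in> half_tree E u w"
    have bij: "bij f" using assms(1) unfolding tree_aut_def by simp
    then have "inv_into UNIV f u = u" "inv_into UNIV f w = w"
      using assms(2,3) by (metis bij_inv_eq_iff)+
    then have "inv_into UNIV f x \<in> half_tree E u w"
      using half_tree_closed_under_tree_aut[OF tree_aut_inv[OF assms(1)]] x by blast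
    moreover have "f (inv_into UNIV f x) = x" using bij by (simp add: bij_is_surj surj_f_inv_f)
    ultimately show "x \<in> f ` half_tree E u w" by (metis image_eqI)
  qed
qed

lemma root_in_half_tree: "u \<in> half_tree E u w"
  unfolding half_tree_def by simp

text \<open>A path from u to w avoiding the edge {u, w} would close a cycle.\<close>

lemma not_in_half_tree:
  assumes "is_tree E" "E u w"
  shows "w \<notin> half_tree E u w"
proof
  define R where "R = (\<lambda>p q. E p q \<and> {p, q} \<noteq> {u, w})"
  assume "w \<in> half_tree E u w"
  then have "R\<^sup>*\<^sup>* u w" unfolding half_tree_def R_def by (simp add: rtranclp_rtrancl_eq)
  then obtain xs where "rtrancl_path R u xs w" using rtranclp_eq_rtrancl_path by metis
  then obtain xs where path: "rtrancl_path R u xs w" and dist: "distinct (u # xs)"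
    using rtrancl_path_distinct by metis
  have "u \<noteq> w" "E w u" using assms unfolding is_tree_def by blast+
  then have "xs \<noteq> []" using path by (auto elim: rtrancl_path.cases)
  have "length xs \<ge> 2"
  proof (rule ccontr)
    assume "\<not> length xs \<ge> 2"
    then obtain z where "xs = [z]" using \<open>xs \<noteq> []\<close> by (cases xs) (auto simp: Suc_le_eq)
    then have "R u z" "z = w" using path by (auto elim!: rtrancl_path.cases)
    then show False unfolding R_def by simp
  qed
  have "graph_cycle E (u # xs)"
    unfolding graph_cycle_def
  proof (intro conjI allI impI dist)
    show "3 \<le> length (u # xs)" using \<open>length xs \<ge> 2\<close> by simp
    show "E ((u # xs) ! i) ((u # xs) ! Suc i)" if "Suc i < length (u # xs)" for i
      using rtrancl_path_nth[OF path, of i] that unfolding R_def by simp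
    have "last (u # xs) = w" using rtrancl_path_last[OF path] \<open>xs \<noteq> []\<close> by simp
    then show "E (last (u # xs)) (hd (u # xs))" using \<open>E w u\<close> by simp
  qed
  then show False using assms(1) unfolding is_tree_def by blast
qed

lemma half_tree_boundary:
  assumes "is_tree E" "E u w" "x \<in> half_tree E u w" "y \<notin> half_tree E u w"
  shows "E x y \<longleftrightarrow> x = u \<and> y = w"
proof
  assume "E x y"
  have "{x, y} = {u, w}"
  proof (rule ccontr)
    assume "{x, y} \<noteq> {u, w}"
    then have "y \<in> half_tree E u w"
      using assms(3) \<open>E x y\<close> unfolding half_tree_def by (simp add: rtrancl_into_rtrancl)
    then show False using assms(4) by simp
  qed
  then show "x = u \<and> y = w"
    using assms(3,4) root_in_half_tree[of u E w] by (auto simp: doubleton_eq_iff)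
qed (use assms(2) in simp)

lemma half_trees_disjoint:
  assumes "is_tree E" "E u w"
  shows "half_tree E w u \<inter> half_tree E u w = {}"
proof -
  define R where "R = {(p, q). E p q \<and> {p, q} \<noteq> {u, w}}"
  have "R\<inverse> = R" using assms(1) unfolding R_def is_tree_def by (auto simp: insert_commute)
  have "w \<in> half_tree E u w" if "x \<in> half_tree E w u" "x \<in> half_tree E u w" for x
  proof -
    have "(w, x) \<in> R\<^sup>*" using that(1) unfolding half_tree_def R_def by (simp add: insert_commute)
    then have "(x, w) \<in> R\<^sup>*" using \<open>R\<inverse> = R\<close> by (metis rtrancl_converseI)
    moreover have "(u, x) \<in> R\<^sup>*" using that(2) unfolding half_tree_def R_def by simp
    ultimately show ?thesis unfolding half_tree_def R_def by (simp add: rtrancl_trans)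
  qed
  then show ?thesis using not_in_half_tree[OF assms] by blast
qed

definition half_tree_patch :: "('v \<Rightarrow> 'v \<Rightarrow> bool) \<Rightarrow> 'v \<Rightarrow> 'v \<Rightarrow> ('v \<Rightarrow> 'v) \<Rightarrow> 'v \<Rightarrow> 'v" where
  "half_tree_patch E u w h = (\<lambda>x. if x \<in> half_tree E u w then h x else x)"

lemma half_tree_patch_tree_aut:
  assumes "is_tree E" "E u w" "tree_aut E h" "h u = u" "h w = w"
  shows "tree_aut E (half_tree_patch E u w h)"
proof -
  let ?A = "half_tree E u w" and ?g = "half_tree_patch E u w h"
  have hA: "h ` ?A = ?A" using tree_aut_image_half_tree[OF assms(3-5)] .
  have "bij_betw h ?A ?A"
    using hA assms(3) unfolding tree_aut_def bij_def bij_betw_def by (auto intro: inj_on_subset)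
  moreover have "bij_betw (\<lambda>x. x) (- ?A) (- ?A)" by (simp add: bij_betw_def)
  ultimately have "bij ?g"
    using bij_betw_disjoint_Un[of h ?A ?A "\<lambda>x. x" "- ?A" "- ?A"]
    unfolding half_tree_patch_def by simp
  moreover have "E x y \<longleftrightarrow> E (?g x) (?g y)" for x y
  proof -
    have boundary: "E p q \<longleftrightarrow> p = u \<and> q = w" if "p \<in> ?A" "q \<notin> ?A" for p q
      using half_tree_boundary[OF assms(1,2) that] .
    have sym: "E p q \<longleftrightarrow> E q p" for p q using assms(1) unfolding is_tree_def by blast
    have hu: "h p = u \<longleftrightarrow> p = u" for p
      using assms(3,4) unfolding tree_aut_def by (metis bij_pointE)
    have hE: "E p q \<longleftrightarrow> E (h p) (h q)" for p q using assms(3) unfolding tree_aut_def by simp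
    have hA': "h p \<in> ?A \<longleftrightarrow> p \<in> ?A" for p
      using hA assms(3) unfolding tree_aut_def by (metis bij_is_inj inj_image_mem_iff)
    consider "x \<in> ?A" "y \<in> ?A" | "x \<notin> ?A" "y \<notin> ?A"
      | "x \<in> ?A" "y \<notin> ?A" | "x \<notin> ?A" "y \<in> ?A" by blast
    then show ?thesis
    proof cases
      case 1
      then show ?thesis using hE[of x y] unfolding half_tree_patch_def by simp
    next
      case 2
      then show ?thesis unfolding half_tree_patch_def by simp
    next
      case 3
      then show ?thesis using boundary[of x y] boundary[of "h x" y] hA'[of x] hu[of x]
        unfolding half_tree_patch_def by simp
    next
      case 4
      then show ?thesis
        using boundary[of y x] boundary[of "h y" x] hA'[of y] hu[of y] sym[of x y] sym[of x "h y"]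
        unfolding half_tree_patch_def by simp
    qed
  qed
  ultimately show ?thesis unfolding tree_aut_def by blast
qed

lemma half_tree_patch_image:
  assumes "tree_aut E h" "h u = u" "h w = w" "h ` V = V"
  shows "half_tree_patch E u w h ` V = V"
proof -
  let ?A = "half_tree E u w"
  have "h ` (V \<inter> ?A) = V \<inter> ?A"
    using assms tree_aut_image_half_tree[OF assms(1-3)] unfolding tree_aut_def
    by (metis bij_is_inj image_Int)
  then show ?thesis
    unfolding half_tree_patch_def by (auto simp: image_iff)
qed

lemma half_tree_patch_local_action:
  assumes "is_tree E" "E u w" "h u = u" "h w = w"
    and "bij_betw (\<lambda>y. c (v, y)) {y. E v y} D"
  shows "local_action E c (half_tree_patch E u w h) v D
           = (if v \<in> half_tree E u w then local_action E c h v D else (\<lambda>x\<in>D. x))"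
proof (cases "v \<in> half_tree E u w")
  case True
  have "half_tree_patch E u w h y = h y" if "E v y" for y
    using half_tree_boundary[OF assms(1,2) True, of y] that assms(4)
    unfolding half_tree_patch_def by auto
  moreover have "half_tree_patch E u w h v = h v"
    using True unfolding half_tree_patch_def by simp
  ultimately have "local_action E c (half_tree_patch E u w h) v D = local_action E c h v D"
    by (intro local_action_cong[where c=c and v=v and E=E, OF assms(5)])
  with True show ?thesis by simp
next
  case False
  have "half_tree_patch E u w h y = y" if "E v y" for y
  proof (cases "y \<in> half_tree E u w")
    case True
    have "E y v" using that assms(1) unfolding is_tree_def by blast
    then show ?thesis
      using half_tree_boundary[OF assms(1,2) True False] True assms(3)
      unfolding half_tree_patch_def by simp
  qed (simp add: half_tree_patch_def)
  moreover have "half_tree_patch E u w h v = v"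
    using False unfolding half_tree_patch_def by simp
  ultimately have "local_action E c (half_tree_patch E u w h) v D = (\<lambda>x\<in>D. x)"
    by (intro local_action_id[where c=c and v=v and E=E, OF assms(5)])
  with False show ?thesis by simp
qed

lemma half_tree_patch_in_U_c:
  assumes "is_tree E" "legal_colouring E VX X Y c" "E u w"
    and "(\<lambda>x\<in>X. x) \<in> M" "(\<lambda>y\<in>Y. y) \<in> N"
    and "h \<in> U_c E VX X Y c M N" "h u = u" "h w = w"
  shows "half_tree_patch E u w h \<in> U_c E VX X Y c M N"
proof -
  have h: "tree_aut E h" "h ` VX = VX"
    "\<And>v. v \<in> VX \<Longrightarrow> local_action E c h v X \<in> M"
    "\<And>v. v \<notin> VX \<Longrightarrow> local_action E c h v Y \<in> N"
    using assms(6) unfolding U_c_def by auto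
  have "local_action E c (half_tree_patch E u w h) v X \<in> M" if "v \<in> VX" for v
  proof -
    have "bij_betw (\<lambda>y. c (v, y)) {y. E v y} X"
      using assms(2) that unfolding legal_colouring_def by blast
    then show ?thesis
      using half_tree_patch_local_action[where c=c, OF assms(1,3,7,8)] h(3)[OF that] assms(4)
      by simp
  qed
  moreover have "local_action E c (half_tree_patch E u w h) v Y \<in> N" if "v \<notin> VX" for v
  proof -
    have "bij_betw (\<lambda>y. c (v, y)) {y. E v y} Y"
      using assms(2) that unfolding legal_colouring_def by blast
    then show ?thesis
      using half_tree_patch_local_action[where c=c, OF assms(1,3,7,8)] h(4)[OF that] assms(5)
      by simp
  qed
  ultimately show ?thesis
    using half_tree_patch_tree_aut[OF assms(1,3) h(1) assms(7,8)]
      half_tree_patch_image[OF h(1) assms(7,8) h(2)]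
    unfolding U_c_def by blast
qed

theorem lemma3p11:
  fixes E :: "'v \<Rightarrow> 'v \<Rightarrow> bool" and VX :: "'v set"
    and X Y :: "'c set" and M N :: "('c \<Rightarrow> 'c) set"
    and c :: "'v \<times> 'v \<Rightarrow> 'c" and a :: "'v \<times> 'v" and h :: "'v \<Rightarrow> 'v"
  assumes "X \<inter> Y = {}"
    and "\<exists>x1 x2. x1 \<in> X \<and> x2 \<in> X \<and> x1 \<noteq> x2"
    and "\<exists>y1 y2. y1 \<in> Y \<and> y2 \<in> Y \<and> y1 \<noteq> y2"
    and "subgroup M (BijGroup X)" and "M \<noteq> {\<one>\<^bsub>BijGroup X\<^esub>}"
    and "subgroup N (BijGroup Y)" and "N \<noteq> {\<one>\<^bsub>BijGroup Y\<^esub>}"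
    and "biregular_tree E VX X Y"
    and "legal_colouring E VX X Y c"
    and "E (fst a) (snd a)"
    and "h \<in> U_c E VX X Y c M N" and "h (fst a) = fst a" and "h (snd a) = snd a"
  shows "\<exists>g \<in> U_c E VX X Y c M N.
           (\<forall>x \<in> half_tree E (snd a) (fst a). g x = x)
         \<and> (\<forall>x \<in> half_tree E (fst a) (snd a). g x = h x)"
proof
  let ?g = "half_tree_patch E (fst a) (snd a) h"
  have tree: "is_tree E" using assms(8) unfolding biregular_tree_def by simp
  have "(\<lambda>x\<in>X. x) \<in> M" "(\<lambda>y\<in>Y. y) \<in> N"
    using subgroup.one_closed[OF assms(4)] subgroup.one_closed[OF assms(6)]
    by (simp_all add: BijGroup_def)
  then show "?g \<in> U_c E VX X Y c M N"
    using half_tree_patch_in_U_c[OF tree assms(9,10)] assms(11-13) by blast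
  show "(\<forall>x \<in> half_tree E (snd a) (fst a). ?g x = x) \<and> (\<forall>x \<in> half_tree E (fst a) (snd a). ?g x = h x)"
    using half_trees_disjoint[OF tree assms(10)] unfolding half_tree_patch_def by auto
qed

end
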